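(* Let $D_1,\dots,D_n$ be PvMDs, set $D:=D_1\cap\dots\cap D_n$, and assume $D$ is essential with respect to $\{D_1,\dots,D_n\}$. Then $D$ is a PvMD.
   Context: For an integral domain $R$ with quotient field $K$ and nonzero fractional ideal $I$: $(R:I)=\{x\in K:xI\subseteq R\}$, $I^v=(R:(R:I))$, $I^t=\bigcup\{J^v:J\subseteq I \text{ finitely generated}\}$; $I$ is a $t$-ideal if $I=(0)$ or $I=I^t$; a $t$-prime is a prime $t$-ideal (so $(0)$ is a $t$-prime); $t$-maximal ideals are $t$-ideals maximal among proper $t$-ideals. $R$ is a PvMD if $R_{\mathfrak m}$ is a valuation domain for all $t$-maximal $\mathfrak m$. The $D_i$ are subrings of a common field. $D=\bigcap_i D_i$ is said to be essential with respect to $\{D_i\}$ if the family $\{(D_i)_{\mathfrak q}:\mathfrak q\in t\text{-Spec}(D_i), i\}$ is an essential representation of $D$, i.e. each $(D_i)_{\mathfrak q}$ is a valuation domain equal to $D_{\mathfrak p}$ for some prime $\mathfrak p$ of $D$. *)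

theory Defs
  imports Main
begin

text \<open>All rings are subrings of a common field, modelled as subsets of a type of class field.\<close>

definition is_subring :: "'a::field set \<Rightarrow> bool" where
  "is_subring R \<longleftrightarrow> 0 \<in> R \<and> 1 \<in> R \<and>
     (\<forall>x\<in>R. \<forall>y\<in>R. x + y \<in> R \<and> x - y \<in> R \<and> x * y \<in> R)"

definition qf :: "'a::field set \<Rightarrow> 'a set" where
  "qf R = {a / b | a b. a \<in> R \<and> b \<in> R \<and> b \<noteq> 0}"

definition is_ideal :: "'a::field set \<Rightarrow> 'a set \<Rightarrow> bool" where
  "is_ideal R I \<longleftrightarrow> I \<subseteq> R \<and> 0 \<in> I \<and>
     (\<forall>x\<in>I. \<forall>y\<in>I. x + y \<in> I) \<and> (\<forall>r\<in>R. \<forall>x\<in>I. r * x \<in> I)"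

definition is_prime_ideal :: "'a::field set \<Rightarrow> 'a set \<Rightarrow> bool" where
  "is_prime_ideal R P \<longleftrightarrow> is_ideal R P \<and> P \<noteq> R \<and>
     (\<forall>a\<in>R. \<forall>b\<in>R. a * b \<in> P \<longrightarrow> a \<in> P \<or> b \<in> P)"

definition colon :: "'a::field set \<Rightarrow> 'a set \<Rightarrow> 'a set" where
  "colon R I = {x \<in> qf R. \<forall>y\<in>I. x * y \<in> R}"

definition vclose :: "'a::field set \<Rightarrow> 'a set \<Rightarrow> 'a set" where
  "vclose R I = colon R (colon R I)"

definition gen :: "'a::field set \<Rightarrow> 'a set \<Rightarrow> 'a set" where
  "gen R F = {\<Sum>a\<in>F. r a * a | r. \<forall>a\<in>F. r a \<in> R}"

definition tclose :: "'a::field set \<Rightarrow> 'a set \<Rightarrow> 'a set" where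
  "tclose R I = \<Union>{vclose R (gen R F) | F. finite F \<and> F \<noteq> {} \<and> F \<subseteq> I - {0}}"

definition is_t_ideal :: "'a::field set \<Rightarrow> 'a set \<Rightarrow> bool" where
  "is_t_ideal R I \<longleftrightarrow> is_ideal R I \<and> (I = {0} \<or> tclose R I = I)"

definition is_t_prime :: "'a::field set \<Rightarrow> 'a set \<Rightarrow> bool" where
  "is_t_prime R P \<longleftrightarrow> is_prime_ideal R P \<and> is_t_ideal R P"

definition is_t_maximal :: "'a::field set \<Rightarrow> 'a set \<Rightarrow> bool" where
  "is_t_maximal R M \<longleftrightarrow> is_t_ideal R M \<and> M \<noteq> R \<and>
     (\<forall>J. is_t_ideal R J \<and> J \<noteq> R \<and> M \<subseteq> J \<longrightarrow> J = M)"

definition localize :: "'a::field set \<Rightarrow> 'a set \<Rightarrow> 'a set" where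
  "localize R P = {a / b | a b. a \<in> R \<and> b \<in> R \<and> b \<notin> P}"

definition is_valuation_domain :: "'a::field set \<Rightarrow> bool" where
  "is_valuation_domain V \<longleftrightarrow> is_subring V \<and>
     (\<forall>x\<in>qf V. x \<noteq> 0 \<longrightarrow> x \<in> V \<or> inverse x \<in> V)"

definition is_PvMD :: "'a::field set \<Rightarrow> bool" where
  "is_PvMD R \<longleftrightarrow> is_subring R \<and>
     (\<forall>M. is_t_maximal R M \<longrightarrow> is_valuation_domain (localize R M))"

definition essential_wrt :: "'a::field set \<Rightarrow> 'i set \<Rightarrow> ('i \<Rightarrow> 'a set) \<Rightarrow> bool" where
  "essential_wrt D I Ds \<longleftrightarrow>
     (\<forall>i\<in>I. \<forall>q. is_t_prime (Ds i) q \<longrightarrow>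
        is_valuation_domain (localize (Ds i) q) \<and>
        (\<exists>p. is_prime_ideal D p \<and> localize (Ds i) q = localize D p))"

end

theory Submission imports Defs begin

(*
  Let M be a t-maximal ideal of D; M is prime.  The key observation is that M cannot
  generate the unit t-ideal in every D_i: if 1 lay in M^t computed in each D_i, the
  finitely many witnessing finite subsets of M would together witness 1 in M^t computed
  in D (the divisorial closure of a finitely generated ideal of D is contained in each of
  the corresponding closures over the D_i, because D is their intersection), contradicting
  M^t = M.  Hence some D_i has a proper t-ideal containing M, and by Zorn's lemma a t-prime
  Q of D_i containing M.  By essentiality (D_i)_Q = D_p is a valuation domain for a prime
  p of D; primes of D inside Q lie inside p, so D_M is an overring of the valuation domain
  D_p with the same quotient field, hence itself a valuation domain.
*)

lemma subringD:
  assumes "is_subring R"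
  shows "0 \<in> R" "1 \<in> R" "x \<in> R \<Longrightarrow> y \<in> R \<Longrightarrow> x + y \<in> R"
    "x \<in> R \<Longrightarrow> y \<in> R \<Longrightarrow> x - y \<in> R" "x \<in> R \<Longrightarrow> y \<in> R \<Longrightarrow> x * y \<in> R"
  using assms unfolding is_subring_def by auto

lemma subring_INT: "(\<And>i. i \<in> I \<Longrightarrow> is_subring (Ds i)) \<Longrightarrow> is_subring (\<Inter>i\<in>I. Ds i)"
  unfolding is_subring_def by blast

lemma sum_closed:
  assumes "0 \<in> S" "\<forall>x\<in>S. \<forall>y\<in>S. x + y \<in> S" "\<forall>x\<in>F. f x \<in> S"
  shows "sum f F \<in> S"
  using assms(3)
proof (induction F rule: infinite_finite_induct)
  case (insert x F)
  then show ?case using assms(2) by simp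
qed (use assms in auto)

lemma subset_qf: "is_subring R \<Longrightarrow> R \<subseteq> qf R"
  unfolding qf_def by (force dest: subringD(2))

lemma qf_mono: "A \<subseteq> B \<Longrightarrow> qf A \<subseteq> qf B"
  unfolding qf_def by blast

lemma qf_zero: "is_subring R \<Longrightarrow> (0::'a::field) \<in> qf R"
  using subset_qf subringD(1) by blast

lemma qf_one: "is_subring R \<Longrightarrow> (1::'a::field) \<in> qf R"
  using subset_qf subringD(2) by blast

lemma qf_add:
  assumes R: "is_subring R" and "x \<in> qf R" "y \<in> qf R"
  shows "x + y \<in> qf R"
proof -
  obtain a b where x: "x = a / b" "a \<in> R" "b \<in> R" "b \<noteq> 0" using assms(2) unfolding qf_def by blast
  obtain c d where y: "y = c / d" "c \<in> R" "d \<in> R" "d \<noteq> 0" using assms(3) unfolding qf_def by blast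
  have "x + y = (a * d + c * b) / (b * d)" using x y by (simp add: field_simps)
  moreover have "a * d + c * b \<in> R" "b * d \<in> R" "b * d \<noteq> 0" using x y subringD[OF R] by auto
  ultimately show ?thesis unfolding qf_def by blast
qed

lemma qf_mult:
  assumes R: "is_subring R" and "x \<in> qf R" "y \<in> qf R"
  shows "x * y \<in> qf R"
proof -
  obtain a b where x: "x = a / b" "a \<in> R" "b \<in> R" "b \<noteq> 0" using assms(2) unfolding qf_def by blast
  obtain c d where y: "y = c / d" "c \<in> R" "d \<in> R" "d \<noteq> 0" using assms(3) unfolding qf_def by blast
  have "x * y = (a * c) / (b * d)" using x y by simp
  moreover have "a * c \<in> R" "b * d \<in> R" "b * d \<noteq> 0" using x y subringD[OF R] by auto
  ultimately show ?thesis unfolding qf_def by blast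
qed

lemma qf_divide:
  assumes R: "is_subring R" and "x \<in> qf R" "y \<in> qf R"
  shows "x / y \<in> qf R"
proof (cases "y = 0")
  case True
  then show ?thesis using qf_zero[OF R] by simp
next
  case False
  obtain a b where x: "x = a / b" "a \<in> R" "b \<in> R" "b \<noteq> 0" using assms(2) unfolding qf_def by blast
  obtain c d where y: "y = c / d" "c \<in> R" "d \<in> R" "d \<noteq> 0" using assms(3) unfolding qf_def by blast
  have c0: "c \<noteq> 0" using y False by auto
  have "a / b / (c / d) = (a * d) / (b * c)" using x y c0 by (simp add: field_simps)
  then have "x / y = (a * d) / (b * c)" using x y by simp
  moreover have "a * d \<in> R" "b * c \<in> R" "b * c \<noteq> 0" using x y c0 subringD[OF R] by auto
  ultimately show ?thesis unfolding qf_def by blast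
qed

section \<open>The divisorial closure\<close>

lemma colon_antimono: "I \<subseteq> J \<Longrightarrow> colon R J \<subseteq> colon R I"
  unfolding colon_def by auto

lemma vclose_mono: "I \<subseteq> J \<Longrightarrow> vclose R I \<subseteq> vclose R J"
  unfolding vclose_def by (intro colon_antimono)

lemma subset_vclose: "I \<subseteq> qf R \<Longrightarrow> I \<subseteq> vclose R I"
  unfolding vclose_def colon_def by (auto simp: mult.commute)

lemma vclose_idem:
  assumes "I \<subseteq> qf R"
  shows "vclose R (vclose R I) = vclose R I"
proof -
  have "colon R (vclose R I) \<subseteq> colon R I"
    using colon_antimono subset_vclose[OF assms] by blast
  moreover have "colon R I \<subseteq> colon R (vclose R I)"
    using subset_vclose[of "colon R I" R] unfolding vclose_def colon_def by auto
  ultimately show ?thesis unfolding vclose_def by simp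
qed

text \<open>Since 1 lies in (R:I) for an integral ideal I, its v-closure is again integral.\<close>
lemma vclose_subset_ring:
  assumes R: "is_subring R" and "I \<subseteq> R"
  shows "vclose R I \<subseteq> R"
proof
  fix y assume y: "y \<in> vclose R I"
  have "1 \<in> colon R I" unfolding colon_def using qf_one[OF R] assms(2) by auto
  then show "y \<in> R" using y unfolding vclose_def colon_def by force
qed

lemma vclose_submodule:
  assumes R: "is_subring R"
  shows "0 \<in> vclose R I"
    and "x \<in> vclose R I \<Longrightarrow> y \<in> vclose R I \<Longrightarrow> x + y \<in> vclose R I"
    and "r \<in> R \<Longrightarrow> x \<in> vclose R I \<Longrightarrow> r * x \<in> vclose R I"
  using qf_zero[OF R] subringD[OF R] qf_add[OF R] qf_mult[OF R] subset_qf[OF R]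
  unfolding vclose_def colon_def by (auto simp: distrib_right mult.assoc)

lemma vclose_scale:
  assumes R: "is_subring R" and b: "b \<in> R" and bIJ: "\<forall>x\<in>I. b * x \<in> J" and y: "y \<in> vclose R I"
  shows "b * y \<in> vclose R J"
proof -
  have bq: "b \<in> qf R" using subset_qf[OF R] b by blast
  have yq: "y \<in> qf R" using y unfolding vclose_def colon_def by blast
  have "b * y * z \<in> R" if z: "z \<in> colon R J" for z
  proof -
    have "z * b \<in> colon R I" using z bIJ qf_mult[OF R _ bq]
      unfolding colon_def by (auto simp: mult.assoc)
    then have "y * (z * b) \<in> R" using y unfolding vclose_def colon_def by blast
    then show ?thesis by (simp add: ac_simps)
  qed
  then show ?thesis using qf_mult[OF R bq yq] unfolding vclose_def colon_def[of R "colon R J"] by blast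
qed

lemma gen_submodule:
  assumes R: "is_subring R"
  shows "0 \<in> gen R F"
    and "x \<in> gen R F \<Longrightarrow> y \<in> gen R F \<Longrightarrow> x + y \<in> gen R F"
    and "c \<in> R \<Longrightarrow> x \<in> gen R F \<Longrightarrow> c * x \<in> gen R F"
proof -
  show "0 \<in> gen R F" unfolding gen_def
    by (intro CollectI exI[of _ "\<lambda>_. 0"]) (simp add: subringD[OF R])
next
  assume "x \<in> gen R F" "y \<in> gen R F"
  then obtain r s where "x = (\<Sum>a\<in>F. r a * a)" "\<forall>a\<in>F. r a \<in> R"
      "y = (\<Sum>a\<in>F. s a * a)" "\<forall>a\<in>F. s a \<in> R"
    unfolding gen_def by blast
  then show "x + y \<in> gen R F" unfolding gen_def
    by (intro CollectI exI[of _ "\<lambda>a. r a + s a"]) (auto simp: sum.distrib distrib_right subringD[OF R])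
next
  assume "c \<in> R" "x \<in> gen R F"
  then obtain r where "x = (\<Sum>a\<in>F. r a * a)" "\<forall>a\<in>F. r a \<in> R"
    unfolding gen_def by blast
  then show "c * x \<in> gen R F" unfolding gen_def using \<open>c \<in> R\<close>
    by (intro CollectI exI[of _ "\<lambda>a. c * r a"]) (auto simp: sum_distrib_left mult.assoc subringD[OF R])
qed

lemma gen_least:
  assumes "0 \<in> S" "\<forall>x\<in>S. \<forall>y\<in>S. x + y \<in> S" "\<forall>c\<in>R. \<forall>x\<in>S. c * x \<in> S" "F \<subseteq> S"
  shows "gen R F \<subseteq> S"
proof
  fix x assume "x \<in> gen R F"
  then obtain r where "x = (\<Sum>a\<in>F. r a * a)" "\<forall>a\<in>F. r a \<in> R" unfolding gen_def by blast
  then show "x \<in> S" using assms by (auto intro!: sum_closed)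
qed

lemma generator_in_gen:
  assumes R: "is_subring R" and "finite F" "a \<in> F"
  shows "a \<in> gen R F"
proof -
  have "(\<Sum>x\<in>F. (if x = a then 1 else 0) * x) = (\<Sum>x\<in>F. if x = a then x else 0)"
    by (rule sum.cong) auto
  also have "\<dots> = a" using assms(2,3) by simp
  finally show ?thesis unfolding gen_def using subringD[OF R]
    by (intro CollectI exI[of _ "\<lambda>x. if x = a then 1 else 0"]) auto
qed

lemma gen_subset_ring: "is_subring R \<Longrightarrow> F \<subseteq> R \<Longrightarrow> gen R F \<subseteq> R"
  by (rule gen_least) (auto simp: subringD)

lemma gen_subset_qf: "is_subring R \<Longrightarrow> F \<subseteq> R \<Longrightarrow> gen R F \<subseteq> qf R"
  using gen_subset_ring subset_qf by blast

lemma gen_mono: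
  assumes R: "is_subring R" and "finite G" "F \<subseteq> G"
  shows "gen R F \<subseteq> gen R G"
  using gen_submodule[OF R] generator_in_gen[OF R assms(2)] assms(3)
  by (intro gen_least) auto

lemma gen_scale:
  assumes R: "is_subring R" and "finite F" "x \<in> gen R F"
  shows "b * x \<in> gen R ((*) b ` F)"
proof -
  have "\<forall>x\<in>F. b * x \<in> gen R ((*) b ` F)"
    using generator_in_gen[OF R, of "(*) b ` F"] assms(2) by blast
  then have "gen R F \<subseteq> {y. b * y \<in> gen R ((*) b ` F)}"
    using gen_submodule[OF R, where F="(*) b ` F"]
    by (intro gen_least) (auto simp: distrib_left mult.left_commute)
  then show ?thesis using assms(3) by blast
qed

section \<open>The t-closure\<close>

lemma tcloseE:
  assumes "x \<in> tclose R X"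
  obtains F where "finite F" "F \<noteq> {}" "F \<subseteq> X - {0}" "x \<in> vclose R (gen R F)"
  using assms unfolding tclose_def by blast

lemma tcloseI:
  "finite F \<Longrightarrow> F \<noteq> {} \<Longrightarrow> F \<subseteq> X - {0} \<Longrightarrow> x \<in> vclose R (gen R F) \<Longrightarrow> x \<in> tclose R X"
  unfolding tclose_def by blast

lemma tclose_subset_ring: "is_subring R \<Longrightarrow> X \<subseteq> R \<Longrightarrow> tclose R X \<subseteq> R"
  unfolding tclose_def using vclose_subset_ring[OF _ gen_subset_ring] by blast

lemma subset_tclose:
  assumes R: "is_subring R" and "X \<subseteq> R" "x0 \<in> X" "x0 \<noteq> 0"
  shows "X \<subseteq> tclose R X"
proof
  fix x assume x: "x \<in> X"
  show "x \<in> tclose R X"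
  proof (cases "x = 0")
    case True
    then show ?thesis using vclose_submodule(1)[OF R] assms(3,4) by (intro tcloseI[of "{x0}"]) auto
  next
    case False
    have "x \<in> vclose R (gen R {x})"
      using generator_in_gen[OF R, of "{x}" x] gen_subset_qf[OF R, of "{x}"] subset_vclose x assms(2)
      by blast
    then show ?thesis using x False by (intro tcloseI[of "{x}"]) auto
  qed
qed

text \<open>The t-closure of a nonzero integral set is an ideal: v-closures of finitely generated
  submodules form a directed family of submodules.\<close>
lemma tclose_is_ideal:
  assumes R: "is_subring R" and "X \<subseteq> R" "x0 \<in> X" "x0 \<noteq> 0"
  shows "is_ideal R (tclose R X)"
  unfolding is_ideal_def
proof (intro conjI ballI)
  have vc_mono: "vclose R (gen R F) \<subseteq> vclose R (gen R G)" if "finite G" "F \<subseteq> G" for F G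
    by (rule vclose_mono[OF gen_mono[OF R that]])
  show "tclose R X \<subseteq> R" using tclose_subset_ring[OF R assms(2)] .
  show "0 \<in> tclose R X" using vclose_submodule(1)[OF R] assms(3,4) by (intro tcloseI[of "{x0}"]) auto
  fix x y assume "x \<in> tclose R X" "y \<in> tclose R X"
  then obtain F G where F: "finite F" "F \<noteq> {}" "F \<subseteq> X - {0}" "x \<in> vclose R (gen R F)"
    and G: "finite G" "G \<noteq> {}" "G \<subseteq> X - {0}" "y \<in> vclose R (gen R G)"
    by (metis tcloseE)
  have "x \<in> vclose R (gen R (F \<union> G))" "y \<in> vclose R (gen R (F \<union> G))"
    using vc_mono[of "F \<union> G" F] vc_mono[of "F \<union> G" G] F G by auto
  then show "x + y \<in> tclose R X"
    using vclose_submodule(2)[OF R] F G by (intro tcloseI[of "F \<union> G"]) auto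
next
  fix r x assume "r \<in> R" "x \<in> tclose R X"
  then show "r * x \<in> tclose R X"
    by (metis tcloseE tcloseI vclose_submodule(3)[OF R])
qed

text \<open>The t-closure is idempotent: a finite subset of X^t lies in the v-closure of one finite
  subset of X.\<close>
lemma tclose_idem:
  assumes R: "is_subring R" and "X \<subseteq> R"
  shows "tclose R (tclose R X) \<subseteq> tclose R X"
proof
  fix x assume "x \<in> tclose R (tclose R X)"
  then obtain G where G: "finite G" "G \<noteq> {}" "G \<subseteq> tclose R X - {0}" "x \<in> vclose R (gen R G)"
    by (rule tcloseE)
  have "\<forall>g\<in>G. \<exists>F. finite F \<and> F \<noteq> {} \<and> F \<subseteq> X - {0} \<and> g \<in> vclose R (gen R F)"
    using G(3) unfolding tclose_def by blast
  then obtain f where f: "\<forall>g\<in>G. finite (f g) \<and> f g \<noteq> {} \<and> f g \<subseteq> X - {0} \<and> g \<in> vclose R (gen R (f g))"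
    by metis
  define F where "F = \<Union>(f ` G)"
  have F: "finite F" "F \<noteq> {}" "F \<subseteq> X - {0}" using f G(1,2) unfolding F_def by auto
  have "G \<subseteq> vclose R (gen R F)"
  proof
    fix g assume "g \<in> G"
    then have "f g \<subseteq> F" "g \<in> vclose R (gen R (f g))" using f unfolding F_def by auto
    then show "g \<in> vclose R (gen R F)" using vclose_mono[OF gen_mono[OF R F(1)]] by blast
  qed
  then have "gen R G \<subseteq> vclose R (gen R F)"
    using vclose_submodule[OF R] by (intro gen_least) auto
  then have "vclose R (gen R G) \<subseteq> vclose R (gen R F)"
    using vclose_mono vclose_idem[OF gen_subset_qf[OF R]] F(3) assms(2)
    by (metis Diff_subset order_trans)
  then show "x \<in> tclose R X" using G(4) tcloseI[OF F] by blast
qed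

lemma tclose_is_t_ideal:
  assumes R: "is_subring R" and "X \<subseteq> R" "x0 \<in> X" "x0 \<noteq> 0"
  shows "is_t_ideal R (tclose R X)"
proof -
  have "tclose R X \<subseteq> tclose R (tclose R X)"
    using subset_tclose[OF R tclose_subset_ring[OF R assms(2)]] subset_tclose[OF R assms(2-4)] assms(3,4)
    by blast
  then show ?thesis unfolding is_t_ideal_def
    using tclose_is_ideal[OF R assms(2-4)] tclose_idem[OF R assms(2)] by blast
qed

text \<open>A t-ideal contains its t-closure (the closure of the zero ideal is empty).\<close>
lemma t_ideal_tclose_subset: "is_t_ideal R J \<Longrightarrow> tclose R J \<subseteq> J"
  unfolding is_t_ideal_def tclose_def by auto

lemma scaled_vclose_in_tclose:
  assumes R: "is_subring R" and b: "b \<in> R" and F: "finite F" "F \<noteq> {}"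
    and bF: "(*) b ` F \<subseteq> Q - {0}" and x: "x \<in> vclose R (gen R F)"
  shows "b * x \<in> tclose R Q"
proof -
  have "b * x \<in> vclose R (gen R ((*) b ` F))"
    using vclose_scale[OF R b _ x] gen_scale[OF R F(1)] by blast
  then show ?thesis using F bF by (intro tcloseI[of "(*) b ` F"]) auto
qed

lemma ideal_unit: "is_ideal R J \<Longrightarrow> 1 \<in> J \<Longrightarrow> J = R"
  unfolding is_ideal_def by (metis mult.right_neutral subsetI subset_antisym)

lemma prime_ideal_unit: "is_prime_ideal R P \<Longrightarrow> 1 \<notin> P"
  unfolding is_prime_ideal_def using ideal_unit by blast

lemma prime_idealD:
  assumes "is_prime_ideal R P"
  shows "is_ideal R P" "P \<subseteq> R" "0 \<in> P"
  using assms unfolding is_prime_ideal_def is_ideal_def by simp_all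

lemma zero_prime:
  assumes R: "is_subring R"
  shows "is_prime_ideal R {0}" "is_t_prime R {0}"
proof -
  have "is_ideal R {0}" unfolding is_ideal_def using subringD(1)[OF R] by auto
  moreover have "{0} \<noteq> R" using subringD(2)[OF R] by force
  ultimately show P: "is_prime_ideal R {0}" unfolding is_prime_ideal_def by auto
  then show "is_t_prime R {0}" unfolding is_t_prime_def is_t_ideal_def is_prime_ideal_def by auto
qed

text \<open>A nonzero t-ideal maximal among the t-ideals avoiding 1 is prime: if ab \<in> Q with
  a \<notin> Q, the t-closure of Q + aR contains 1, and multiplying its witness by b shows b \<in> Q^t = Q.\<close>
lemma maximal_t_ideal_prime:
  assumes R: "is_subring R" and Q: "is_t_ideal R Q" "1 \<notin> Q" "q0 \<in> Q" "q0 \<noteq> 0"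
    and max: "\<forall>J. is_t_ideal R J \<and> Q \<subseteq> J \<and> 1 \<notin> J \<longrightarrow> J = Q"
  shows "is_prime_ideal R Q"
proof -
  have QI: "is_ideal R Q" using Q(1) unfolding is_t_ideal_def by blast
  have QR: "Q \<subseteq> R" "0 \<in> Q" using QI unfolding is_ideal_def by auto
  have "a \<in> Q \<or> b \<in> Q" if ab: "a \<in> R" "b \<in> R" "a * b \<in> Q" for a b
  proof (rule ccontr)
    assume nab: "\<not> (a \<in> Q \<or> b \<in> Q)"
    then have a0: "a \<noteq> 0" and b0: "b \<noteq> 0" using QR by auto
    define S where "S = {q + a * r | q r. q \<in> Q \<and> r \<in> R}"
    have SR: "S \<subseteq> R" unfolding S_def using QR ab subringD[OF R] by auto
    have aS: "a \<in> S" unfolding S_def using QR subringD(2)[OF R] by force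
    have QS: "Q \<subseteq> S" unfolding S_def using subringD(1)[OF R] by force
    have "1 \<in> tclose R S"
    proof (rule ccontr)
      assume "1 \<notin> tclose R S"
      then have "tclose R S = Q"
        using max tclose_is_t_ideal[OF R SR aS a0] subset_tclose[OF R SR aS a0] QS by blast
      then show False using subset_tclose[OF R SR aS a0] aS nab by blast
    qed
    then obtain F where F: "finite F" "F \<noteq> {}" "F \<subseteq> S - {0}" "1 \<in> vclose R (gen R F)"
      by (rule tcloseE)
    have "(*) b ` F \<subseteq> Q - {0}"
    proof
      fix y assume "y \<in> (*) b ` F"
      then obtain x where x: "x \<in> F" "y = b * x" by blast
      then obtain q r where qr: "x = q + a * r" "q \<in> Q" "r \<in> R" "x \<noteq> 0"
        using F(3) unfolding S_def by blast
      have "b * x = b * q + r * (a * b)" using qr(1) by (simp add: algebra_simps)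
      moreover have "b * q \<in> Q" "r * (a * b) \<in> Q" using QI qr ab unfolding is_ideal_def by auto
      ultimately have "b * x \<in> Q" using QI unfolding is_ideal_def by simp
      then show "y \<in> Q - {0}" using x qr(4) b0 by simp
    qed
    then have "b \<in> tclose R Q" using scaled_vclose_in_tclose[OF R ab(2) F(1,2) _ F(4)] by simp
    then show False using t_ideal_tclose_subset[OF Q(1)] nab by blast
  qed
  moreover have "Q \<noteq> R" using Q(2) subringD(2)[OF R] by blast
  ultimately show ?thesis unfolding is_prime_ideal_def using QI by blast
qed

lemma t_maximal_prime:
  assumes R: "is_subring R" and M: "is_t_maximal R M"
  shows "is_prime_ideal R M"
proof (cases "M = {0}")
  case True
  then show ?thesis using zero_prime(1)[OF R] by simp
next
  case False
  have Mt: "is_t_ideal R M" and MR: "M \<noteq> R" and max: "\<forall>J. is_t_ideal R J \<and> J \<noteq> R \<and> M \<subseteq> J \<longrightarrow> J = M"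
    using M unfolding is_t_maximal_def by auto
  have MI: "is_ideal R M" using Mt unfolding is_t_ideal_def by blast
  then obtain m0 where "m0 \<in> M" "m0 \<noteq> 0" using False unfolding is_ideal_def by blast
  moreover have "1 \<notin> M" using ideal_unit[OF MI] MR by blast
  moreover have "\<forall>J. is_t_ideal R J \<and> M \<subseteq> J \<and> 1 \<notin> J \<longrightarrow> J = M"
    using max subringD(2)[OF R] by blast
  ultimately show ?thesis using maximal_t_ideal_prime[OF R Mt] by blast
qed

text \<open>The union of a nonempty chain of t-ideals with a nonzero element is a t-ideal, since
  the t-closure only involves finite subsets.\<close>
lemma chain_Union_t_ideal:
  assumes R: "is_subring R" and C: "C \<noteq> {}" "subset.chain {J. is_t_ideal R J} C"
    and m0: "m0 \<in> \<Union>C" "m0 \<noteq> 0"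
  shows "is_t_ideal R (\<Union>C)"
proof -
  have ideal: "is_ideal R J" and closed: "tclose R J \<subseteq> J" if "J \<in> C" for J
    using C(2) that t_ideal_tclose_subset unfolding subset_chain_def is_t_ideal_def by auto
  have chain: "\<forall>X\<in>C. \<forall>Y\<in>C. X \<subseteq> Y \<or> Y \<subseteq> X" using C(2) unfolding subset_chain_def by auto
  have UR: "\<Union>C \<subseteq> R" using ideal unfolding is_ideal_def by blast
  have "is_ideal R (\<Union>C)" unfolding is_ideal_def
  proof (intro conjI ballI)
    show "\<Union>C \<subseteq> R" by (rule UR)
    show "0 \<in> \<Union>C" using C(1) ideal unfolding is_ideal_def by blast
  next
    fix x y assume "x \<in> \<Union>C" "y \<in> \<Union>C"
    then have "\<exists>J\<in>C. x \<in> J \<and> y \<in> J" using chain by blast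
    then show "x + y \<in> \<Union>C" using ideal unfolding is_ideal_def by blast
  next
    fix r x assume "r \<in> R" "x \<in> \<Union>C"
    then show "r * x \<in> \<Union>C" using ideal unfolding is_ideal_def by blast
  qed
  moreover have "tclose R (\<Union>C) \<subseteq> \<Union>C"
  proof
    fix x assume "x \<in> tclose R (\<Union>C)"
    then obtain G where G: "finite G" "G \<noteq> {}" "G \<subseteq> \<Union>C - {0}" "x \<in> vclose R (gen R G)"
      by (rule tcloseE)
    obtain J where J: "J \<in> C" "G \<subseteq> J" using finite_subset_Union_chain[OF G(1) _ C] G(3) by blast
    have "x \<in> tclose R J" using G J by (intro tcloseI[of G]) auto
    then show "x \<in> \<Union>C" using closed J(1) by blast
  qed
  moreover have "\<Union>C \<subseteq> tclose R (\<Union>C)" using subset_tclose[OF R UR m0] .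
  ultimately show ?thesis unfolding is_t_ideal_def by blast
qed

lemma exists_t_prime:
  assumes R: "is_subring R" and M: "M \<subseteq> R" "1 \<notin> tclose R M"
  shows "\<exists>Q. is_t_prime R Q \<and> M \<subseteq> Q"
proof (cases "M \<subseteq> {0}")
  case True
  then show ?thesis using zero_prime(2)[OF R] by blast
next
  case False
  then obtain m0 where m0: "m0 \<in> M" "m0 \<noteq> 0" by blast
  define A where "A = {J. is_t_ideal R J \<and> M \<subseteq> J \<and> 1 \<notin> J}"
  have "tclose R M \<in> A"
    unfolding A_def using tclose_is_t_ideal[OF R M(1) m0] subset_tclose[OF R M(1) m0] M(2) by blast
  then have "A \<noteq> {}" by blast
  moreover have "\<Union>C \<in> A" if C: "C \<noteq> {}" "subset.chain A C" for C
  proof -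
    have "subset.chain {J. is_t_ideal R J} C" using C(2) unfolding A_def subset_chain_def by auto
    moreover have "M \<subseteq> \<Union>C" using C unfolding A_def subset_chain_def by blast
    moreover have "1 \<notin> \<Union>C" using C unfolding A_def subset_chain_def by blast
    ultimately show ?thesis unfolding A_def using chain_Union_t_ideal[OF R C(1)] m0 by blast
  qed
  ultimately obtain Q where Q: "Q \<in> A" "\<forall>X\<in>A. Q \<subseteq> X \<longrightarrow> X = Q"
    using subset_Zorn_nonempty by blast
  have "is_prime_ideal R Q"
    using Q m0 by (intro maximal_t_ideal_prime[OF R, of Q m0]) (auto simp: A_def)
  then show ?thesis using Q unfolding A_def is_t_prime_def by blast
qed

section \<open>Localizations\<close>

lemma localize_subring:
  assumes R: "is_subring R" and P: "is_prime_ideal R P"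
  shows "is_subring (localize R P)"
proof -
  have P0: "0 \<in> P" using prime_idealD(3)[OF P] .
  have P1: "1 \<notin> P" using prime_ideal_unit[OF P] .
  have mult_notin: "b * d \<notin> P" if "b \<in> R" "d \<in> R" "b \<notin> P" "d \<notin> P" for b d
    using P that unfolding is_prime_ideal_def by blast
  have "0 / 1 \<in> localize R P" "1 / 1 \<in> localize R P"
    unfolding localize_def using subringD[OF R] P1 by blast+
  moreover have "x + y \<in> localize R P \<and> x - y \<in> localize R P \<and> x * y \<in> localize R P"
    if xy: "x \<in> localize R P" "y \<in> localize R P" for x y
  proof -
    obtain a b where x: "x = a / b" "a \<in> R" "b \<in> R" "b \<notin> P" using xy(1) unfolding localize_def by blast
    obtain c d where y: "y = c / d" "c \<in> R" "d \<in> R" "d \<notin> P" using xy(2) unfolding localize_def by blast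
    have "b \<noteq> 0" "d \<noteq> 0" using x y P0 by auto
    then have "x + y = (a * d + c * b) / (b * d)" "x - y = (a * d - c * b) / (b * d)"
      "x * y = (a * c) / (b * d)"
      using x(1) y(1) by (simp_all add: field_simps)
    moreover have "a * d + c * b \<in> R" "a * d - c * b \<in> R" "a * c \<in> R" "b * d \<in> R"
      using x y subringD[OF R] by auto
    moreover have "b * d \<notin> P" using mult_notin x y by blast
    ultimately show ?thesis unfolding localize_def by blast
  qed
  ultimately show ?thesis unfolding is_subring_def by simp
qed

lemma ring_subset_localize:
  assumes "is_prime_ideal R P" "is_subring R"
  shows "R \<subseteq> localize R P"
proof
  fix x assume "x \<in> R"
  moreover have "x = x / 1" by simp
  ultimately show "x \<in> localize R P"
    unfolding localize_def using prime_ideal_unit[OF assms(1)] subringD(2)[OF assms(2)] by blast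
qed

lemma localize_antimono: "P \<subseteq> P' \<Longrightarrow> localize R P' \<subseteq> localize R P"
  unfolding localize_def by blast

lemma qf_localize:
  assumes R: "is_subring R" and P: "is_prime_ideal R P"
  shows "qf (localize R P) = qf R"
proof
  have "0 \<in> P" using prime_idealD(3)[OF P] .
  then have sub: "localize R P \<subseteq> qf R"
    unfolding localize_def qf_def by fastforce
  show "qf (localize R P) \<subseteq> qf R"
  proof
    fix x assume "x \<in> qf (localize R P)"
    then obtain u v where "x = u / v" "u \<in> localize R P" "v \<in> localize R P"
      unfolding qf_def by blast
    then show "x \<in> qf R" using qf_divide[OF R] sub by blast
  qed
  show "qf R \<subseteq> qf (localize R P)" by (rule qf_mono[OF ring_subset_localize[OF P R]])
qed

lemma valuation_overring:
  assumes V: "is_valuation_domain V" and W: "is_subring W" "V \<subseteq> W" "qf W \<subseteq> qf V"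
  shows "is_valuation_domain W"
  unfolding is_valuation_domain_def
proof (intro conjI ballI impI)
  fix x assume "x \<in> qf W" "x \<noteq> 0"
  then have "x \<in> V \<or> inverse x \<in> V" using V W(3) unfolding is_valuation_domain_def by blast
  then show "x \<in> W \<or> inverse x \<in> W" using W(2) by blast
qed (rule W(1))

text \<open>If (D')_Q = D_p for an overring D' of D, every prime of D inside Q lies inside p: an
  element m \<in> M outside p would be a unit of D_p, but it lies in the maximal ideal of (D')_Q.\<close>
lemma prime_below_center:
  assumes D: "is_subring D" and Q: "is_ideal D' Q" "M \<subseteq> Q" and MD: "M \<subseteq> D"
    and p: "0 \<in> p" and eq: "localize D' Q = localize D p"
  shows "M \<subseteq> p"
proof
  fix m assume m: "m \<in> M"
  show "m \<in> p"
  proof (rule ccontr)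
    assume nm: "m \<notin> p"
    have "1 / m \<in> localize D p" unfolding localize_def using subringD(2)[OF D] MD m nm by blast
    then have "1 / m \<in> localize D' Q" using eq by simp
    then obtain a b where ab: "1 / m = a / b" "a \<in> D'" "b \<in> D'" "b \<notin> Q"
      unfolding localize_def by blast
    have "0 \<in> Q" using Q(1) unfolding is_ideal_def by blast
    then have "m \<noteq> 0" "b \<noteq> 0" using p nm ab(4) by auto
    then have "b = a * m" using ab(1) by (simp add: field_simps)
    moreover have "a * m \<in> Q" using Q ab(2) m unfolding is_ideal_def by blast
    ultimately show False using ab(4) by simp
  qed
qed

lemma localization_valuation_from_overring:
  assumes D: "is_subring D" and M: "is_prime_ideal D M"
    and Q: "is_ideal D' Q" "M \<subseteq> Q" and p: "is_prime_ideal D p"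
    and V: "is_valuation_domain (localize D' Q)" and eq: "localize D' Q = localize D p"
  shows "is_valuation_domain (localize D M)"
proof (rule valuation_overring)
  show "is_valuation_domain (localize D p)" using V eq by simp
  have "M \<subseteq> p" using prime_below_center[OF D Q prime_idealD(2)[OF M] prime_idealD(3)[OF p] eq] .
  then show "localize D p \<subseteq> localize D M" by (rule localize_antimono)
  show "is_subring (localize D M)" using localize_subring[OF D M] .
  show "qf (localize D M) \<subseteq> qf (localize D p)" using qf_localize[OF D M] qf_localize[OF D p] by simp
qed

section \<open>The t-closure over an intersection\<close>

lemma colon_gen_overring:
  assumes D: "is_subring D" and D': "is_subring D'" "D \<subseteq> D'" and F: "finite F" "G \<subseteq> F"
    and z: "z \<in> colon D (gen D F)"
  shows "z \<in> colon D' (gen D' G)"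
  unfolding colon_def
proof (intro CollectI conjI ballI)
  show "z \<in> qf D'" using z qf_mono[OF D'(2)] unfolding colon_def by blast
  fix g assume "g \<in> gen D' G"
  then obtain r where r: "g = (\<Sum>a\<in>G. r a * a)" "\<forall>a\<in>G. r a \<in> D'"
    unfolding gen_def by blast
  have "z * a \<in> D'" if "a \<in> G" for a
    using z generator_in_gen[OF D F(1)] that F(2) D'(2) unfolding colon_def by blast
  then have "\<forall>a\<in>G. r a * (z * a) \<in> D'" using r(2) subringD(5)[OF D'(1)] by blast
  moreover have "z * g = (\<Sum>a\<in>G. r a * (z * a))" unfolding r(1)
    by (simp add: sum_distrib_left ac_simps)
  ultimately show "z * g \<in> D'" using sum_closed[of D'] subringD(1,3)[OF D'(1)] by auto
qed

text \<open>If 1 lies in the t-closure of M over each of finitely many D_i, it lies in the t-closure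
  of M over their intersection: the union of the finite witnesses is a witness over D.\<close>
lemma unit_in_tclose_INT:
  assumes I: "finite I" "I \<noteq> {}" and Ds: "\<forall>i\<in>I. is_subring (Ds i)"
    and one: "\<forall>i\<in>I. 1 \<in> tclose (Ds i) M"
  shows "1 \<in> tclose (\<Inter>i\<in>I. Ds i) M"
proof -
  define D where "D = (\<Inter>i\<in>I. Ds i)"
  have D: "is_subring D" unfolding D_def using Ds by (intro subring_INT) auto
  have "\<forall>i\<in>I. \<exists>F. finite F \<and> F \<noteq> {} \<and> F \<subseteq> M - {0} \<and> 1 \<in> vclose (Ds i) (gen (Ds i) F)"
    using one unfolding tclose_def by blast
  then obtain f where f: "\<forall>i\<in>I. finite (f i) \<and> f i \<noteq> {} \<and> f i \<subseteq> M - {0} \<and>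
      1 \<in> vclose (Ds i) (gen (Ds i) (f i))"
    by metis
  define F where "F = \<Union>(f ` I)"
  have F: "finite F" "F \<noteq> {}" "F \<subseteq> M - {0}" using f I unfolding F_def by auto
  have "z \<in> D" if z: "z \<in> colon D (gen D F)" for z
  proof -
    have "z \<in> Ds i" if i: "i \<in> I" for i
    proof -
      have "D \<subseteq> Ds i" "f i \<subseteq> F" using i unfolding D_def F_def by blast+
      then have "z \<in> colon (Ds i) (gen (Ds i) (f i))"
        using colon_gen_overring[OF D _ _ F(1) _ z] Ds i by blast
      then show ?thesis using f i unfolding vclose_def colon_def[of _ "colon _ _"] by force
    qed
    then show ?thesis unfolding D_def by blast
  qed
  then have "1 \<in> vclose D (gen D F)"
    unfolding vclose_def colon_def[of D "colon D _"] using qf_one[OF D] by simp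
  then show ?thesis using tcloseI[OF F] unfolding D_def by blast
qed

theorem essential_intersection_PvMD:
  assumes I: "finite I" "I \<noteq> {}" and Ds: "\<forall>i\<in>I. is_subring (Ds i)"
    and ess: "essential_wrt (\<Inter>i\<in>I. Ds i) I Ds"
  shows "is_PvMD (\<Inter>i\<in>I. Ds i)"
proof -
  define D where "D = (\<Inter>i\<in>I. Ds i)"
  have D: "is_subring D" unfolding D_def using Ds by (intro subring_INT) auto
  have "is_valuation_domain (localize D M)" if Mt: "is_t_maximal D M" for M
  proof -
    have M: "is_prime_ideal D M" using t_maximal_prime[OF D Mt] .
    have "is_t_ideal D M" using Mt unfolding is_t_maximal_def by blast
    then have "1 \<notin> tclose D M" using t_ideal_tclose_subset prime_ideal_unit[OF M] by blast
    then obtain i where i: "i \<in> I" "1 \<notin> tclose (Ds i) M"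
      using unit_in_tclose_INT[OF I Ds] unfolding D_def by blast
    have "M \<subseteq> Ds i" using prime_idealD(2)[OF M] i(1) unfolding D_def by blast
    then obtain Q where Q: "is_t_prime (Ds i) Q" "M \<subseteq> Q"
      using exists_t_prime[OF _ _ i(2)] Ds i(1) by blast
    obtain p where p: "is_prime_ideal D p" and V: "is_valuation_domain (localize (Ds i) Q)"
        and eq: "localize (Ds i) Q = localize D p"
      using ess i(1) Q(1) unfolding essential_wrt_def D_def by blast
    have "is_ideal (Ds i) Q" using Q(1) prime_idealD(1) unfolding is_t_prime_def by blast
    then show ?thesis by (rule localization_valuation_from_overring[OF D M _ Q(2) p V eq])
  qed
  then show ?thesis unfolding is_PvMD_def D_def[symmetric] using D by blast
qed

theorem corollary2p15:
  fixes Ds :: "nat \<Rightarrow> 'a::field set" and n :: nat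
  assumes "n \<ge> 1"
    and "\<forall>i<n. is_PvMD (Ds i)"
    and "essential_wrt (\<Inter>i<n. Ds i) {..<n} Ds"
  shows "is_PvMD (\<Inter>i<n. Ds i)"
proof (rule essential_intersection_PvMD)
  show "finite {..<n}" by simp
  show "{..<n} \<noteq> {}" using assms(1) by (simp add: lessThan_empty_iff)
  show "\<forall>i\<in>{..<n}. is_subring (Ds i)" using assms(2) unfolding is_PvMD_def by blast
  show "essential_wrt (\<Inter>i<n. Ds i) {..<n} Ds" using assms(3) .
qed

end
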